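(* Consider $N$ users indexed by $\mathcal{U}=\{1,\dots,N\}$ with fixed channel power gains $h_1,\dots,h_N>0$ and noise variance $\eta>0$. For each $i\in\mathcal{U}$ let the strategy set be $\mathcal{P}^i=[0,P_i^{max}]$ with $P_i^{max}>0$, and for $\mathbf{P}=(P_1,\dots,P_N)\in\prod_{i}\mathcal{P}^i$ let $$r_i(\mathbf{P})=\log_2\!\Big(1+\frac{h_iP_i}{\eta+\sum_{j\neq i}h_jP_j}\Big).$$ Given targets $\theta_1,\dots,\theta_N$, a profile $\mathbf{P}^+\in\prod_i\mathcal{P}^i$ is a satisfaction equilibrium (SE) if $r_i(\mathbf{P}^+)\ge\theta_i$ for every $i\in\mathcal{U}$. Then the set of satisfaction equilibria is convex, closed and bounded (as a subset of $\mathbb{R}^N$).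
   Context: This is the game $\mathcal{G}=\{\mathcal{U},\{\mathcal{P}^i\},\{r_i\},\{\theta_i\}\}$: $r_i$ is the bandwidth-normalized throughput of user $i$ (a base-2 logarithm of one plus its signal-to-interference-and-noise ratio), $\theta_i$ is user $i$'s target throughput. *)

theory Defs
  imports "HOL-Analysis.Analysis"
begin

text \<open>Users are the elements of a finite type 'n (so N = CARD('n)); power profiles,
channel gains, maximal powers and targets are vectors in real^'n.\<close>

definition rate :: "real^'n::finite \<Rightarrow> real \<Rightarrow> real^'n \<Rightarrow> 'n \<Rightarrow> real" where
  "rate h \<eta> P i = log 2 (1 + h$i * P$i / (\<eta> + (\<Sum>j\<in>UNIV - {i}. h$j * P$j)))"

definition strategy_space :: "real^'n::finite \<Rightarrow> (real^'n) set" where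
  "strategy_space Pmax = {P. \<forall>i. 0 \<le> P$i \<and> P$i \<le> Pmax$i}"

definition SE_set :: "real^'n::finite \<Rightarrow> real \<Rightarrow> real^'n \<Rightarrow> real^'n \<Rightarrow> (real^'n) set" where
  "SE_set h \<eta> Pmax \<theta> = {P \<in> strategy_space Pmax. \<forall>i. rate h \<eta> P i \<ge> \<theta>$i}"

end

theory Submission
  imports Defs
begin

text \<open>For nonnegative powers the denominator \<open>\<eta> + (\<Sum>j\<noteq>i. h$j * P$j)\<close> is positive, so the
  target constraint of user \<open>i\<close> is equivalent to the linear inequality
  \<open>h$i * P$i - (2 powr \<theta>$i - 1) * (\<Sum>j\<noteq>i. h$j * P$j) \<ge> (2 powr \<theta>$i - 1) * \<eta>\<close>.
  The satisfaction equilibria are therefore the intersection of the box of strategy profiles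
  with \<open>N\<close> closed half-spaces.\<close>

lemma log2_one_plus_ge_iff:
  fixes t x D :: real
  assumes "D > 0" and "x \<ge> 0"
  shows "t \<le> log 2 (1 + x / D) \<longleftrightarrow> (2 powr t - 1) * D \<le> x"
proof -
  have "1 + x / D > 0"
    using assms by (simp add: add_pos_nonneg)
  then have "t \<le> log 2 (1 + x / D) \<longleftrightarrow> 2 powr t \<le> 1 + x / D"
    by (simp add: le_log_iff)
  also have "\<dots> \<longleftrightarrow> (2 powr t - 1) * D \<le> x"
    using \<open>D > 0\<close> by (simp add: field_simps)
  finally show ?thesis .
qed

lemma strategy_space_eq_cbox: "strategy_space Pmax = cbox 0 Pmax"
  by (auto simp: strategy_space_def mem_box_cart)

definition constraint_normal :: "real^'n::finite \<Rightarrow> real^'n \<Rightarrow> 'n \<Rightarrow> real^'n" where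
  "constraint_normal h \<theta> i = (\<chi> j. if j = i then h$j else - (2 powr (\<theta>$i) - 1) * h$j)"

lemma inner_constraint_normal:
  "constraint_normal h \<theta> i \<bullet> P = h$i * P$i - (2 powr (\<theta>$i) - 1) * (\<Sum>j\<in>UNIV - {i}. h$j * P$j)"
proof -
  have "constraint_normal h \<theta> i \<bullet> P = (\<Sum>j\<in>UNIV. constraint_normal h \<theta> i $ j * P$j)"
    by (simp add: inner_vec_def)
  also have "\<dots> = h$i * P$i + (\<Sum>j\<in>UNIV - {i}. - (2 powr (\<theta>$i) - 1) * (h$j * P$j))"
    by (simp add: sum.remove[of UNIV i] constraint_normal_def mult.assoc)
  finally show ?thesis
    by (simp only: sum_distrib_left[symmetric])
qed

lemma rate_ge_iff_halfspace:
  assumes "\<And>j. h$j > 0" and "\<eta> > 0" and "P \<in> strategy_space Pmax"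
  shows "\<theta>$i \<le> rate h \<eta> P i \<longleftrightarrow> (2 powr (\<theta>$i) - 1) * \<eta> \<le> constraint_normal h \<theta> i \<bullet> P"
proof -
  have P_nonneg: "0 \<le> P$j" for j
    using assms(3) by (simp add: strategy_space_def)
  have "(\<Sum>j\<in>UNIV - {i}. h$j * P$j) \<ge> 0"
    using assms(1) P_nonneg by (intro sum_nonneg) (simp add: less_imp_le)
  then have "\<eta> + (\<Sum>j\<in>UNIV - {i}. h$j * P$j) > 0"
    using assms(2) by linarith
  moreover have "h$i * P$i \<ge> 0"
    using assms(1) P_nonneg by (simp add: less_imp_le)
  ultimately show ?thesis
    unfolding rate_def inner_constraint_normal
    by (simp add: log2_one_plus_ge_iff algebra_simps)
qed

lemma SE_set_eq_box_Int_halfspaces: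
  assumes "\<And>j. h$j > 0" and "\<eta> > 0"
  shows "SE_set h \<eta> Pmax \<theta> =
    cbox 0 Pmax \<inter> (\<Inter>i. {P. (2 powr (\<theta>$i) - 1) * \<eta> \<le> constraint_normal h \<theta> i \<bullet> P})"
  using rate_ge_iff_halfspace[OF assms]
  by (auto simp: SE_set_def strategy_space_eq_cbox)

theorem proposition1:
  fixes h Pmax \<theta> :: "real^'n::finite" and \<eta> :: real
  assumes "\<And>i. h$i > 0" and "\<eta> > 0" and "\<And>i. Pmax$i > 0"
  shows "convex (SE_set h \<eta> Pmax \<theta>) \<and> closed (SE_set h \<eta> Pmax \<theta>) \<and> bounded (SE_set h \<eta> Pmax \<theta>)"
  unfolding SE_set_eq_box_Int_halfspaces[OF assms(1,2)]
  by (intro conjI convex_Int convex_INT closed_Int closed_INT bounded_Int disjI1 ballI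
      convex_box convex_halfspace_ge closed_cbox closed_halfspace_ge bounded_cbox)

end
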